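(* Assume that $\kappa_{\mathcal H}(X_i,X_i)<\infty$ almost surely for every $i\in\{1,\dots,n+1\}$, and that for every $y\in\mathcal Y$ the map $u\mapsto\ell(y,u)$ is convex and three times differentiable, $u\mapsto\partial_2\ell(y,u)$ is $\beta_{\ell;2}$-Lipschitz continuous ($\beta_{\ell;2}\in(0,\infty)$), and $\sup_{u\in\mathcal Y}|\partial_2^3\ell(y,u)|\le\xi_\ell$ ($\xi_\ell\in(0,\infty)$). Then $$\big\|\hat f_{\lambda;D^y}-\tilde f^{\mathrm{IF}}_{\lambda;D^y}\big\|_{\mathcal H}\le\sqrt{K_{n+1,n+1}}\min\Big(\frac{\rho^{(2)}_\lambda(y)}{\lambda^3(n+1)^2},\frac{2\rho^{(1)}_\lambda(y)}{\lambda(n+1)}\Big),$$ where $\rho^{(1)}_\lambda(y)=\frac12\big|-\partial_2\ell(z,\hat f_{\lambda;D^z}(X_{n+1}))+\partial_2\ell(y,\hat f_{\lambda;D^z}(X_{n+1}))\big|$, $\tilde\rho^{(1)}_\lambda(y)=\big(1+K_{n+1,n+1}\frac{\beta_{\ell;2}}{\lambda(n+1)}\big)\rho^{(1)}_\lambda(y)$ and $$\rho^{(2)}_\lambda(y)=\frac{\xi_\ell}2\sqrt{K_{n+1,n+1}}\Big(\frac1{n+1}\sum_{i=1}^{n+1}K_{i,i}^{3/2}\Big)\big(\tilde\rho^{(1)}_\lambda(y)\big)^2+2\lambda K_{n+1,n+1}\beta_{\ell;2}\tilde\rho^{(1)}_\lambda(y).$$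
   Context: Let $\mathcal X\subset\mathbb R^d$, $\mathcal Y\subset\mathbb R$, $D=\{(X_1,Y_1),\dots,(X_n,Y_n)\}$ i.i.d., $(X_{n+1},Y_{n+1})$ independent with the same law; $D^{y'}=D\cup\{(X_{n+1},y')\}$. $\mathcal H$ is an RKHS with kernel $\kappa_{\mathcal H}$, $K_x=\kappa_{\mathcal H}(x,\cdot)$, $K=(\kappa_{\mathcal H}(X_i,X_j))_{1\le i,j\le n+1}$, $\mathcal A=\mathrm{span}\{K_{X_1},\dots,K_{X_{n+1}}\}$. For a loss $\ell$ and $\lambda>0$, $\hat f_{\lambda;D^{y'}}$ minimizes $\frac1{n+1}\sum_{(x,y'')\in D^{y'}}\ell(y'',f(x))+\lambda\|f\|_{\mathcal H}^2$ over $\mathcal H$. Fix $z\in\mathcal Y$ and a candidate $y\in\mathcal Y$. Let $\mathbf u=(1,\dots,1,1,0)\in\mathbb R^{n+2}$ and for $f\in\mathcal H$ let $H(f)=\frac1{n+1}\sum_{i=1}^n\partial_2^2\ell(Y_i,f(X_i))K_{X_i}\otimes K_{X_i}+\frac1{n+1}\partial_2^2\ell(z,f(X_{n+1}))K_{X_{n+1}}\otimes K_{X_{n+1}}+2\lambda\mathrm{Id}$ (the second Fréchet differential at $f$ of the $D^z$ regularized risk $\frac1{n+1}\sum_{(x,y'')\in D^z}\ell(y'',f(x))+\lambda\|f\|^2$), with $(g\otimes g)h=\langle g,h\rangle_{\mathcal H}g$, and $H(f)^+$ the inverse of its restriction to $\mathcal A$. For $z'\in\mathcal Y$, $\mathbf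 I_{\hat f}(X_{n+1},z')=-\frac1{n+1}\partial_2\ell(z',\hat f_{\lambda;D^z}(X_{n+1}))H(\hat f_{\lambda;D^z})^+K_{X_{n+1}}$, and the influence-function-based approximation is $\tilde f^{\mathrm{IF}}_{\lambda;D^y}=\hat f_{\lambda;D^z}-\mathbf I_{\hat f}(X_{n+1},z)+\mathbf I_{\hat f}(X_{n+1},y)$. $\partial_2,\partial_2^2,\partial_2^3$ denote derivatives in the second argument of $\ell$. *)

theory Defs
  imports "HOL-Analysis.Analysis"
begin

text \<open>Abstract RKHS: a real Hilbert space 'h with canonical feature map
  Kf x = K_x; a function f in H is evaluated by the reproducing property
  f(x) = <f, K_x>. Data: X i, Y i for i = 1..n; test point X (n+1).\<close>

definition ev :: "('x \<Rightarrow> 'h::real_inner) \<Rightarrow> 'h \<Rightarrow> 'x \<Rightarrow> real" where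
  "ev Kf f x = inner f (Kf x)"

definition kmat :: "('x \<Rightarrow> 'h::real_inner) \<Rightarrow> (nat \<Rightarrow> 'x) \<Rightarrow> nat \<Rightarrow> nat \<Rightarrow> real" where
  "kmat Kf X i j = inner (Kf (X i)) (Kf (X j))"

text \<open>Regularized empirical risk on D^{y'} = D \<union> {(X_{n+1}, y')}.\<close>
definition risk :: "(real \<Rightarrow> real \<Rightarrow> real) \<Rightarrow> real \<Rightarrow> ('x \<Rightarrow> 'h::real_inner)
    \<Rightarrow> (nat \<Rightarrow> 'x) \<Rightarrow> (nat \<Rightarrow> real) \<Rightarrow> nat \<Rightarrow> real \<Rightarrow> 'h \<Rightarrow> real" where
  "risk loss lam Kf X Y n y' f =
     (1 / real (n + 1)) * ((\<Sum>i=1..n. loss (Y i) (ev Kf f (X i))) + loss y' (ev Kf f (X (n + 1))))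
     + lam * (norm f)\<^sup>2"

definition Aspan :: "('x \<Rightarrow> 'h::real_inner) \<Rightarrow> (nat \<Rightarrow> 'x) \<Rightarrow> nat \<Rightarrow> 'h set" where
  "Aspan Kf X n = span ((\<lambda>i. Kf (X i)) ` {1..n + 1})"

text \<open>H(f): second Frechet differential of the D^z regularized risk at f,
  with d2 the second derivative of the loss in its second argument.\<close>
definition hess :: "(real \<Rightarrow> real \<Rightarrow> real) \<Rightarrow> real \<Rightarrow> ('x \<Rightarrow> 'h::real_inner)
    \<Rightarrow> (nat \<Rightarrow> 'x) \<Rightarrow> (nat \<Rightarrow> real) \<Rightarrow> nat \<Rightarrow> real \<Rightarrow> 'h \<Rightarrow> 'h \<Rightarrow> 'h" where
  "hess d2 lam Kf X Y n z f h =
     (1 / real (n + 1)) *\<^sub>R (\<Sum>i=1..n. (d2 (Y i) (ev Kf f (X i)) * inner (Kf (X i)) h) *\<^sub>R Kf (X i))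
     + (1 / real (n + 1)) *\<^sub>R ((d2 z (ev Kf f (X (n + 1))) * inner (Kf (X (n + 1))) h) *\<^sub>R Kf (X (n + 1)))
     + (2 * lam) *\<^sub>R h"

definition hess_pinv :: "(real \<Rightarrow> real \<Rightarrow> real) \<Rightarrow> real \<Rightarrow> ('x \<Rightarrow> 'h::real_inner)
    \<Rightarrow> (nat \<Rightarrow> 'x) \<Rightarrow> (nat \<Rightarrow> real) \<Rightarrow> nat \<Rightarrow> real \<Rightarrow> 'h \<Rightarrow> 'h \<Rightarrow> 'h" where
  "hess_pinv d2 lam Kf X Y n z f v =
     (THE a. a \<in> Aspan Kf X n \<and> hess d2 lam Kf X Y n z f a = v)"

text \<open>Influence function I_fhat(X_{n+1}, z'), with fz = fhat_{lambda;D^z}.\<close>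
definition infl :: "(real \<Rightarrow> real \<Rightarrow> real) \<Rightarrow> (real \<Rightarrow> real \<Rightarrow> real) \<Rightarrow> real
    \<Rightarrow> ('x \<Rightarrow> 'h::real_inner) \<Rightarrow> (nat \<Rightarrow> 'x) \<Rightarrow> (nat \<Rightarrow> real) \<Rightarrow> nat \<Rightarrow> real
    \<Rightarrow> 'h \<Rightarrow> real \<Rightarrow> 'h" where
  "infl d1 d2 lam Kf X Y n z fz z' =
     - ((1 / real (n + 1)) * d1 z' (ev Kf fz (X (n + 1))))
       *\<^sub>R hess_pinv d2 lam Kf X Y n z fz (Kf (X (n + 1)))"

definition f_IF :: "(real \<Rightarrow> real \<Rightarrow> real) \<Rightarrow> (real \<Rightarrow> real \<Rightarrow> real) \<Rightarrow> real
    \<Rightarrow> ('x \<Rightarrow> 'h::real_inner) \<Rightarrow> (nat \<Rightarrow> 'x) \<Rightarrow> (nat \<Rightarrow> real) \<Rightarrow> nat \<Rightarrow> real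
    \<Rightarrow> 'h \<Rightarrow> real \<Rightarrow> 'h" where
  "f_IF d1 d2 lam Kf X Y n z fz y =
     fz - infl d1 d2 lam Kf X Y n z fz z + infl d1 d2 lam Kf X Y n z fz y"

end

theory Submission
  imports Defs
begin

(*
  Write K = Kf (X (n + 1)), H for the Hessian at fz and P = H^+ K. The influence-function
  approximation is fz - delta P, where delta is the change of the loss derivative at the new
  point caused by replacing the label z by y, so the error is e = (fy - fz) + delta P.
  The regularizer makes the gradient of the risk 2 lam-strongly monotone and H 2 lam-coercive.
  Strong monotonicity, applied to the first-order conditions of fz and fy, bounds ||fy - fz||
  by |delta| ||K|| / (2 lam), and coercivity bounds ||P|| by ||K|| / (2 lam): this is the
  first-order bound. For the second-order bound one computes H e: since H P = K, it is a
  difference of first derivatives of the loss, controlled by beta ||fy - fz||, minus the Taylor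
  remainder of the gradient between fz and fy, controlled by xi ||fy - fz||^2; coercivity of H
  transfers the bound to e.
*)

lemma convex_on_deriv_mono:
  fixes f f' :: "real \<Rightarrow> real"
  assumes convex: "convex_on UNIV f" and deriv: "\<And>u. (f has_real_derivative f' u) (at u)"
  shows "mono f'"
proof (rule monoI)
  fix a b :: real assume "a \<le> b"
  have "f' a * (b - a) \<le> f b - f a" "f' b * (a - b) \<le> f a - f b"
    using convex_on_imp_above_tangent[OF convex] deriv by (auto simp: has_field_derivative_at_within)
  then have "(f' b - f' a) * (b - a) \<ge> 0" by (simp add: algebra_simps)
  with \<open>a \<le> b\<close> show "f' a \<le> f' b"
    by (cases "a = b") (auto simp: zero_le_mult_iff)
qed

lemma mono_imp_deriv_nonneg:
  fixes g :: "real \<Rightarrow> real"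
  assumes "mono g" and "(g has_real_derivative g') (at u)"
  shows "0 \<le> g'"
proof (rule tendsto_lowerbound)
  show "((\<lambda>t. (g t - g u) / (t - u)) \<longlongrightarrow> g') (at u)"
    using assms(2) by (simp add: has_field_derivative_iff)
  show "\<forall>\<^sub>F t in at u. 0 \<le> (g t - g u) / (t - u)"
    using assms(1) by (intro always_eventually allI) (smt (verit) monoD zero_le_divide_iff)
qed simp

lemma mono_diff_mult_nonneg:
  fixes h :: "real \<Rightarrow> real"
  assumes "mono h"
  shows "0 \<le> (h a - h b) * (a - b)"
proof (cases "a \<le> b")
  case True
  then show ?thesis using monoD[OF assms True] by (simp add: mult_nonpos_nonpos)
next
  case False
  then show ?thesis using monoD[OF assms, of b a] by simp
qed

lemma taylor_remainder_le:
  fixes g h k :: "real \<Rightarrow> real"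
  assumes g: "\<And>u. (g has_real_derivative h u) (at u)"
    and h: "\<And>u. (h has_real_derivative k u) (at u)"
    and k: "\<And>u. \<bar>k u\<bar> \<le> \<xi>"
  shows "\<bar>g a - g b - h b * (a - b)\<bar> \<le> \<xi> * (a - b)\<^sup>2"
proof -
  have "0 \<le> \<xi>" using k[of 0] by linarith
  have "\<bar>h t - h b\<bar> \<le> \<xi> * \<bar>a - b\<bar>" if "t \<in> closed_segment b a" for t
  proof -
    have "\<bar>h t - h b\<bar> \<le> \<xi> * \<bar>t - b\<bar>"
      using field_differentiable_bound[of UNIV h k \<xi> t b] h k by simp
    also have "\<dots> \<le> \<xi> * \<bar>a - b\<bar>"
      using segment_bound1[OF that] \<open>0 \<le> \<xi>\<close> by (simp add: mult_left_mono)
    finally show ?thesis .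
  qed
  moreover have "((\<lambda>t. g t - h b * t) has_real_derivative h t - h b) (at t)" for t
    by (rule derivative_eq_intros g refl | simp)+
  ultimately have "\<bar>(g a - h b * a) - (g b - h b * b)\<bar> \<le> \<xi> * \<bar>a - b\<bar> * \<bar>a - b\<bar>"
    using field_differentiable_bound[of "closed_segment b a" "\<lambda>t. g t - h b * t" "\<lambda>t. h t - h b"]
    by (simp add: has_field_derivative_at_within)
  then show ?thesis by (simp add: algebra_simps power2_eq_square abs_mult_self)
qed

lemma norm_ge_if_inner_ge:
  fixes a b :: "'a::real_inner"
  assumes "c * (norm a)\<^sup>2 \<le> inner b a"
  shows "c * norm a \<le> norm b"
proof -
  have "c * norm a * norm a \<le> norm b * norm a"
    using assms norm_cauchy_schwarz[of b a] by (simp add: power2_eq_square mult.assoc)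
  then show ?thesis
    by (cases "norm a = 0") (auto simp: mult_le_cancel_right)
qed

(* H maps a basis of span S to an independent subset of span S of the same size, which
   therefore spans it. *)
lemma span_subset_image_if_linear_inj:
  fixes H :: "'a::real_vector \<Rightarrow> 'a"
  assumes "finite S" and "linear H" and "inj H" and "H ` span S \<subseteq> span S"
  shows "span S \<subseteq> H ` span S"
proof -
  obtain B where B: "B \<subseteq> S" "independent B" "S \<subseteq> span B"
    using maximal_independent_subset[of S] by blast
  have span_B: "span B = span S"
    using span_mono[OF B(1)] span_minimal[OF B(3) subspace_span] by (rule subset_antisym)
  have "finite B" using B(1) \<open>finite S\<close> by (rule finite_subset)
  have inj_B: "inj_on H B" using \<open>inj H\<close> by (rule inj_on_subset) simp
  have indep_HB: "independent (H ` B)"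
    using linear_independent_injective_image[OF \<open>linear H\<close> B(2)] \<open>inj H\<close>
    by (meson inj_on_subset subset_UNIV)
  have HB_sub: "H ` B \<subseteq> span B"
    using assms(4) span_superset[of S] B(1) unfolding span_B by blast
  have "span B \<subseteq> span (H ` B)"
  proof
    fix a assume a: "a \<in> span B"
    show "a \<in> span (H ` B)"
    proof (rule ccontr)
      assume a_notin: "a \<notin> span (H ` B)"
      then have "a \<notin> H ` B" using span_superset[of "H ` B"] by blast
      have "independent (insert a (H ` B))"
        using indep_HB a_notin by (simp add: independent_insert)
      moreover have "insert a (H ` B) \<subseteq> span B" using a HB_sub by blast
      ultimately have "card (insert a (H ` B)) \<le> card B"
        using independent_span_bound[OF \<open>finite B\<close>] by blast
      moreover have "card (insert a (H ` B)) = card B + 1"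
        using card_image[OF inj_B] \<open>a \<notin> H ` B\<close> \<open>finite B\<close> by simp
      ultimately show False by simp
    qed
  qed
  then show ?thesis
    using span_B span_linear_image[OF \<open>linear H\<close>, of B] by simp
qed

definition aug_label :: "(nat \<Rightarrow> real) \<Rightarrow> nat \<Rightarrow> real \<Rightarrow> nat \<Rightarrow> real" where
  "aug_label Y n w i = (if i = n + 1 then w else Y i)"

lemma sum_aug_label:
  "(\<Sum>i=1..n + 1. g (aug_label Y n w i) i) = (\<Sum>i=1..n. g (Y i) i) + g w (n + 1)"
  by (simp add: aug_label_def)

definition grad :: "(real \<Rightarrow> real \<Rightarrow> real) \<Rightarrow> real \<Rightarrow> ('x \<Rightarrow> 'h::real_inner)
    \<Rightarrow> (nat \<Rightarrow> 'x) \<Rightarrow> (nat \<Rightarrow> real) \<Rightarrow> nat \<Rightarrow> real \<Rightarrow> 'h \<Rightarrow> 'h" where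
  "grad d1 lam Kf X Y n w f =
     (1 / real (n + 1)) *\<^sub>R (\<Sum>i=1..n + 1. d1 (aug_label Y n w i) (ev Kf f (X i)) *\<^sub>R Kf (X i))
     + (2 * lam) *\<^sub>R f"

lemma risk_eq_sum:
  "risk loss lam Kf X Y n w f =
     (1 / real (n + 1)) * (\<Sum>i=1..n + 1. loss (aug_label Y n w i) (ev Kf f (X i))) + lam * (norm f)\<^sup>2"
  unfolding risk_def sum_aug_label[where g = "\<lambda>l i. loss l (ev Kf f (X i))"] ..

lemma hess_eq_sum:
  "hess d2 lam Kf X Y n w f a =
     (1 / real (n + 1)) *\<^sub>R
       (\<Sum>i=1..n + 1. (d2 (aug_label Y n w i) (ev Kf f (X i)) * inner (Kf (X i)) a) *\<^sub>R Kf (X i))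
     + (2 * lam) *\<^sub>R a"
  unfolding hess_def scaleR_add_right
    sum_aug_label[where g = "\<lambda>l i. (d2 l (ev Kf f (X i)) * inner (Kf (X i)) a) *\<^sub>R Kf (X i)"] ..

(* As a simp rule this needs Kf instantiated: Kf x is not a first-order pattern. *)
lemma inner_feature_eq_ev: "inner (Kf x) f = ev Kf f x"
  by (simp add: ev_def inner_commute)

lemma ev_add: "ev Kf (f + g) x = ev Kf f x + ev Kf g x"
  by (simp add: ev_def inner_add_left)

lemma ev_diff: "ev Kf (f - g) x = ev Kf f x - ev Kf g x"
  by (simp add: ev_def inner_diff_left)

lemma ev_scaleR: "ev Kf (c *\<^sub>R f) x = c * ev Kf f x"
  by (simp add: ev_def)

lemma sqrt_kmat_diag: "sqrt (kmat Kf X i i) = norm (Kf (X i))"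
  by (simp add: kmat_def norm_eq_sqrt_inner)

lemma kmat_diag_powr: "kmat Kf X i i powr (3 / 2) = norm (Kf (X i)) ^ 3"
proof -
  have "kmat Kf X i i powr (3 / 2) = (norm (Kf (X i)) powr 2) powr (3 / 2)"
    by (simp add: kmat_def power2_norm_eq_inner)
  also have "\<dots> = norm (Kf (X i)) ^ 3"
    by (subst powr_powr) simp
  finally show ?thesis .
qed

lemma grad_eq_zero_if_minimizer:
  fixes Kf :: "'x \<Rightarrow> 'h::real_inner"
  assumes deriv: "\<And>i u. i \<in> {1..n + 1} \<Longrightarrow>
      (loss (aug_label Y n w i) has_real_derivative d1 (aug_label Y n w i) u) (at u)"
    and min: "\<And>g. risk loss lam Kf X Y n w f \<le> risk loss lam Kf X Y n w g"
  shows "grad d1 lam Kf X Y n w f = 0"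
proof -
  \<comment> \<open>The derivative of the risk at f in the direction h of the gradient is the squared norm of h.\<close>
  define h where "h = grad d1 lam Kf X Y n w f"
  let ?l = "aug_label Y n w"
  have "(norm (f + t *\<^sub>R h))\<^sup>2 = inner f f + 2 * t * inner f h + t\<^sup>2 * inner h h" for t
    by (simp only: power2_norm_eq_inner)
      (simp add: inner_add_left inner_add_right inner_commute power2_eq_square algebra_simps)
  then have line: "risk loss lam Kf X Y n w (f + t *\<^sub>R h) =
      (1 / real (n + 1)) * (\<Sum>i=1..n + 1. loss (?l i) (ev Kf f (X i) + t * ev Kf h (X i)))
      + lam * (inner f f + 2 * t * inner f h + t\<^sup>2 * inner h h)" for t
    by (simp add: risk_eq_sum ev_add ev_scaleR)
  have "((\<lambda>t. loss (?l i) (ev Kf f (X i) + t * ev Kf h (X i))) has_real_derivative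
      d1 (?l i) (ev Kf f (X i)) * ev Kf h (X i)) (at 0)" if "i \<in> {1..n + 1}" for i
  proof -
    have "((\<lambda>t. ev Kf f (X i) + t * ev Kf h (X i)) has_real_derivative ev Kf h (X i)) (at 0)"
      by (auto intro!: derivative_eq_intros)
    from DERIV_chain2[OF _ this, of "loss (?l i)" "d1 (?l i) (ev Kf f (X i))"] deriv[OF that]
    show ?thesis by simp
  qed
  then have "((\<lambda>t. risk loss lam Kf X Y n w (f + t *\<^sub>R h)) has_real_derivative
      (1 / real (n + 1)) * (\<Sum>i=1..n + 1. d1 (?l i) (ev Kf f (X i)) * ev Kf h (X i))
      + lam * (2 * inner f h)) (at 0)"
    unfolding line by (auto intro!: derivative_eq_intros DERIV_sum)
  also have "(1 / real (n + 1)) * (\<Sum>i=1..n + 1. d1 (?l i) (ev Kf f (X i)) * ev Kf h (X i))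
      + lam * (2 * inner f h) = inner h h"
    by (subst (3) h_def) (simp add: grad_def ev_def inner_add_right inner_sum_right inner_commute)
  finally have "inner h h = 0"
    by (rule DERIV_local_min[where d = 1]) (auto intro: min)
  then show ?thesis by (simp add: h_def)
qed

lemma grad_diff_label:
  "grad d1 lam Kf X Y n w f - grad d1 lam Kf X Y n w' f =
     ((d1 w (ev Kf f (X (n + 1))) - d1 w' (ev Kf f (X (n + 1)))) / real (n + 1)) *\<^sub>R Kf (X (n + 1))"
  unfolding grad_def sum_aug_label[where g = "\<lambda>l i. d1 l (ev Kf f (X i)) *\<^sub>R Kf (X i)"]
  by (simp add: algebra_simps diff_divide_distrib)

lemma grad_strongly_monotone:
  assumes "\<And>i. i \<in> {1..n + 1} \<Longrightarrow> mono (d1 (aug_label Y n w i))"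
  shows "2 * lam * norm (f - g) \<le> norm (grad d1 lam Kf X Y n w f - grad d1 lam Kf X Y n w g)"
proof (rule norm_ge_if_inner_ge)
  let ?l = "aug_label Y n w"
  let ?S = "\<Sum>i=1..n + 1. (d1 (?l i) (ev Kf f (X i)) - d1 (?l i) (ev Kf g (X i))) *\<^sub>R Kf (X i)"
  have diff: "grad d1 lam Kf X Y n w f - grad d1 lam Kf X Y n w g
      = (1 / real (n + 1)) *\<^sub>R ?S + (2 * lam) *\<^sub>R (f - g)"
    by (simp add: grad_def scaleR_diff_left sum_subtractf algebra_simps del: sum.cl_ivl_Suc)
  have "inner ?S (f - g) = (\<Sum>i=1..n + 1.
      (d1 (?l i) (ev Kf f (X i)) - d1 (?l i) (ev Kf g (X i))) * (ev Kf f (X i) - ev Kf g (X i)))"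
    by (simp add: inner_sum_left inner_feature_eq_ev[of Kf] ev_diff del: sum.cl_ivl_Suc)
  also have "\<dots> \<ge> 0" by (intro sum_nonneg mono_diff_mult_nonneg assms) simp
  finally have "0 \<le> inner ?S (f - g)" .
  then show "2 * lam * (norm (f - g))\<^sup>2
      \<le> inner (grad d1 lam Kf X Y n w f - grad d1 lam Kf X Y n w g) (f - g)"
    unfolding diff by (simp add: inner_add_left power2_norm_eq_inner)
qed

lemma linear_hess: "linear (hess d2 lam Kf X Y n w f)"
  unfolding linear_iff
  by (simp add: hess_def inner_add_right scaleR_add_right scaleR_add_left distrib_left
        sum.distrib scaleR_sum_right algebra_simps)

lemma hess_coercive:
  assumes "\<And>i. i \<in> {1..n + 1} \<Longrightarrow> 0 \<le> d2 (aug_label Y n w i) (ev Kf f (X i))"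
  shows "2 * lam * norm a \<le> norm (hess d2 lam Kf X Y n w f a)"
proof (rule norm_ge_if_inner_ge)
  let ?l = "aug_label Y n w"
  have "inner (hess d2 lam Kf X Y n w f a) a = (1 / real (n + 1)) *
      (\<Sum>i=1..n + 1. d2 (?l i) (ev Kf f (X i)) * (inner (Kf (X i)) a)\<^sup>2) + 2 * lam * inner a a"
    by (simp add: hess_eq_sum inner_add_left inner_sum_left power2_eq_square mult.assoc
        del: sum.cl_ivl_Suc)
  moreover have "0 \<le> (\<Sum>i=1..n + 1. d2 (?l i) (ev Kf f (X i)) * (inner (Kf (X i)) a)\<^sup>2)"
    using assms by (intro sum_nonneg mult_nonneg_nonneg) auto
  ultimately show "2 * lam * (norm a)\<^sup>2 \<le> inner (hess d2 lam Kf X Y n w f a) a"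
    by (simp add: power2_norm_eq_inner)
qed

lemma hess_Aspan:
  assumes "a \<in> Aspan Kf X n"
  shows "hess d2 lam Kf X Y n w f a \<in> Aspan Kf X n"
  using assms unfolding hess_eq_sum Aspan_def
  by (intro span_add span_scale span_sum; auto intro: span_base)

lemma hess_hess_pinv:
  assumes "0 < lam"
    and "\<And>i. i \<in> {1..n + 1} \<Longrightarrow> 0 \<le> d2 (aug_label Y n w i) (ev Kf f (X i))"
    and "v \<in> Aspan Kf X n"
  shows "hess d2 lam Kf X Y n w f (hess_pinv d2 lam Kf X Y n w f v) = v"
proof -
  let ?H = "hess d2 lam Kf X Y n w f"
  have coercive: "2 * lam * norm a \<le> norm (?H a)" for a
    by (rule hess_coercive) (rule assms(2))
  have "inj ?H"
  proof (rule injI)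
    fix a b assume "?H a = ?H b"
    moreover have "?H (a - b) = ?H a - ?H b" by (rule linear_diff[OF linear_hess])
    ultimately have "?H (a - b) = 0" by simp
    then show "a = b" using coercive[of "a - b"] \<open>0 < lam\<close>
      by (simp add: mult_le_0_iff)
  qed
  have "Aspan Kf X n \<subseteq> ?H ` Aspan Kf X n"
    unfolding Aspan_def
  proof (rule span_subset_image_if_linear_inj[OF _ linear_hess \<open>inj ?H\<close>])
    show "?H ` span ((\<lambda>i. Kf (X i)) ` {1..n + 1}) \<subseteq> span ((\<lambda>i. Kf (X i)) ` {1..n + 1})"
      using hess_Aspan[unfolded Aspan_def] by blast
  qed simp
  then obtain a where a: "a \<in> Aspan Kf X n" "?H a = v" using assms(3) by blast
  have "hess_pinv d2 lam Kf X Y n w f v = a"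
    unfolding hess_pinv_def using a \<open>inj ?H\<close> by (auto dest: injD)
  with a show ?thesis by simp
qed

lemma norm_grad_taylor_remainder_le:
  fixes Kf :: "'x \<Rightarrow> 'h::real_inner"
  assumes taylor: "\<And>i a b. i \<in> {1..n + 1} \<Longrightarrow>
      \<bar>d1 (aug_label Y n w i) a - d1 (aug_label Y n w i) b - d2 (aug_label Y n w i) b * (a - b)\<bar>
        \<le> \<xi> * (a - b)\<^sup>2"
    and "0 \<le> \<xi>"
  shows "norm (grad d1 lam Kf X Y n w g - grad d1 lam Kf X Y n w f - hess d2 lam Kf X Y n w f (g - f))
     \<le> \<xi> / real (n + 1) * (norm (g - f))\<^sup>2 * (\<Sum>i=1..n + 1. norm (Kf (X i)) ^ 3)"
proof -
  let ?l = "aug_label Y n w"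
  define r where "r i = d1 (?l i) (ev Kf g (X i)) - d1 (?l i) (ev Kf f (X i))
      - d2 (?l i) (ev Kf f (X i)) * (ev Kf g (X i) - ev Kf f (X i))" for i
  have "grad d1 lam Kf X Y n w g - grad d1 lam Kf X Y n w f - hess d2 lam Kf X Y n w f (g - f)
      = (1 / real (n + 1)) *\<^sub>R
        ((\<Sum>i=1..n + 1. d1 (?l i) (ev Kf g (X i)) *\<^sub>R Kf (X i))
        - (\<Sum>i=1..n + 1. d1 (?l i) (ev Kf f (X i)) *\<^sub>R Kf (X i))
        - (\<Sum>i=1..n + 1. (d2 (?l i) (ev Kf f (X i)) * inner (Kf (X i)) (g - f)) *\<^sub>R Kf (X i)))"
    by (simp add: grad_def hess_eq_sum algebra_simps del: sum.cl_ivl_Suc)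
  also have "\<dots> = (1 / real (n + 1)) *\<^sub>R (\<Sum>i=1..n + 1. r i *\<^sub>R Kf (X i))"
    by (simp add: r_def inner_feature_eq_ev[of Kf] ev_diff scaleR_diff_left sum_subtractf
        del: sum.cl_ivl_Suc)
  finally have remainder_eq: "grad d1 lam Kf X Y n w g - grad d1 lam Kf X Y n w f
      - hess d2 lam Kf X Y n w f (g - f) = (1 / real (n + 1)) *\<^sub>R (\<Sum>i=1..n + 1. r i *\<^sub>R Kf (X i))" .
  have "norm (r i *\<^sub>R Kf (X i)) \<le> \<xi> * (norm (g - f))\<^sup>2 * norm (Kf (X i)) ^ 3"
    if "i \<in> {1..n + 1}" for i
  proof -
    have "\<bar>ev Kf (g - f) (X i)\<bar> \<le> norm (g - f) * norm (Kf (X i))"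
      unfolding ev_def by (rule Cauchy_Schwarz_ineq2)
    then have "(ev Kf (g - f) (X i))\<^sup>2 \<le> (norm (g - f) * norm (Kf (X i)))\<^sup>2"
      by (metis abs_ge_zero power2_abs power_mono)
    then have "\<bar>r i\<bar> \<le> \<xi> * (norm (g - f) * norm (Kf (X i)))\<^sup>2"
      using taylor[OF that] \<open>0 \<le> \<xi>\<close> unfolding r_def ev_diff
      by (meson mult_left_mono order_trans)
    then have "\<bar>r i\<bar> * norm (Kf (X i)) \<le> \<xi> * (norm (g - f) * norm (Kf (X i)))\<^sup>2 * norm (Kf (X i))"
      by (rule mult_right_mono) simp
    then show ?thesis
      by (simp add: power2_eq_square power3_eq_cube mult_ac)
  qed
  then have "norm (\<Sum>i=1..n + 1. r i *\<^sub>R Kf (X i))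
      \<le> \<xi> * (norm (g - f))\<^sup>2 * (\<Sum>i=1..n + 1. norm (Kf (X i)) ^ 3)"
    unfolding sum_distrib_left by (intro order_trans[OF norm_sum] sum_mono)
  then show ?thesis
    unfolding remainder_eq by (simp add: divide_right_mono del: sum.cl_ivl_Suc)
qed

lemma f_IF_eq:
  "f_IF d1 d2 lam Kf X Y n z fz y = fz -
     ((d1 y (ev Kf fz (X (n + 1))) - d1 z (ev Kf fz (X (n + 1)))) / real (n + 1))
       *\<^sub>R hess_pinv d2 lam Kf X Y n z fz (Kf (X (n + 1)))"
  by (simp add: f_IF_def infl_def diff_divide_distrib algebra_simps)

(* The hypotheses of the theorem in the form the argument uses them: convexity only through the
   monotonicity of d1 and the sign of d2, the third derivative only through a Taylor bound. *)
locale influence_setting =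
  fixes loss d1 d2 :: "real \<Rightarrow> real \<Rightarrow> real"
    and Kf :: "'x \<Rightarrow> 'h::real_inner"
    and X :: "nat \<Rightarrow> 'x" and Y :: "nat \<Rightarrow> real" and n :: nat
    and lam \<beta> \<xi> :: real and \<Y> :: "real set"
    and z y :: real and fz fy :: 'h
  assumes lam_pos: "0 < lam" and xi_nonneg: "0 \<le> \<xi>"
    and Y_in: "\<forall>i\<in>{1..n}. Y i \<in> \<Y>" and z_in: "z \<in> \<Y>" and y_in: "y \<in> \<Y>"
    and loss_deriv: "\<And>w u. w \<in> \<Y> \<Longrightarrow> (loss w has_real_derivative d1 w u) (at u)"
    and d1_mono: "\<And>w. w \<in> \<Y> \<Longrightarrow> mono (d1 w)"
    and d2_nonneg: "\<And>w u. w \<in> \<Y> \<Longrightarrow> 0 \<le> d2 w u"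
    and d1_lipschitz: "\<And>w. w \<in> \<Y> \<Longrightarrow> \<beta>-lipschitz_on UNIV (d1 w)"
    and d1_taylor: "\<And>w a b. w \<in> \<Y> \<Longrightarrow> \<bar>d1 w a - d1 w b - d2 w b * (a - b)\<bar> \<le> \<xi> * (a - b)\<^sup>2"
    and fz_min: "\<And>g. risk loss lam Kf X Y n z fz \<le> risk loss lam Kf X Y n z g"
    and fy_min: "\<And>g. risk loss lam Kf X Y n y fy \<le> risk loss lam Kf X Y n y g"
begin

lemma aug_label_in:
  "w \<in> \<Y> \<Longrightarrow> i \<in> {1..n + 1} \<Longrightarrow> aug_label Y n w i \<in> \<Y>"
  using Y_in by (auto simp: aug_label_def)

lemma grad_fz: "grad d1 lam Kf X Y n z fz = 0"
  by (rule grad_eq_zero_if_minimizer[where loss = loss])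
    (use loss_deriv aug_label_in z_in fz_min in auto)

lemma grad_fy: "grad d1 lam Kf X Y n y fy = 0"
  by (rule grad_eq_zero_if_minimizer[where loss = loss])
    (use loss_deriv aug_label_in y_in fy_min in auto)

lemma hess_fz_coercive: "2 * lam * norm a \<le> norm (hess d2 lam Kf X Y n z fz a)"
  by (rule hess_coercive) (use d2_nonneg aug_label_in z_in in auto)

lemma hess_fz_hess_pinv:
  "hess d2 lam Kf X Y n z fz (hess_pinv d2 lam Kf X Y n z fz (Kf (X (n + 1)))) = Kf (X (n + 1))"
  by (rule hess_hess_pinv[OF lam_pos])
    (use d2_nonneg aug_label_in z_in in \<open>auto simp: Aspan_def intro: span_base\<close>)

lemma norm_fy_minus_fz_le:
  "norm (fy - fz) \<le> \<bar>d1 y (ev Kf fz (X (n + 1))) - d1 z (ev Kf fz (X (n + 1)))\<bar>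
      * norm (Kf (X (n + 1))) / (2 * lam * real (n + 1))"
proof -
  have "2 * lam * norm (fy - fz) \<le> norm (grad d1 lam Kf X Y n y fy - grad d1 lam Kf X Y n y fz)"
    by (rule grad_strongly_monotone) (use d1_mono aug_label_in y_in in auto)
  also have "\<dots> = norm (grad d1 lam Kf X Y n y fz - grad d1 lam Kf X Y n z fz)"
    using grad_fy grad_fz by (simp add: norm_minus_commute)
  also have "\<dots> = \<bar>d1 y (ev Kf fz (X (n + 1))) - d1 z (ev Kf fz (X (n + 1)))\<bar>
      * norm (Kf (X (n + 1))) / real (n + 1)"
    by (simp add: grad_diff_label)
  finally have "2 * lam * real (n + 1) * norm (fy - fz)
      \<le> \<bar>d1 y (ev Kf fz (X (n + 1))) - d1 z (ev Kf fz (X (n + 1)))\<bar> * norm (Kf (X (n + 1)))"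
    by (simp add: le_divide_eq algebra_simps)
  moreover have "0 < 2 * lam * real (n + 1)" using lam_pos by simp
  ultimately show ?thesis by (simp only: pos_le_divide_eq mult.commute[of "norm (fy - fz)"])
qed

lemma IF_error_le_first_order:
  defines "\<rho> \<equiv> (1 / 2) * \<bar>- d1 z (ev Kf fz (X (n + 1))) + d1 y (ev Kf fz (X (n + 1)))\<bar>"
    and "s \<equiv> norm (Kf (X (n + 1)))" and "N \<equiv> real (n + 1)"
  shows "norm (fy - f_IF d1 d2 lam Kf X Y n z fz y) \<le> s * (2 * \<rho> / (lam * N))"
proof -
  define \<Delta> where "\<Delta> = d1 y (ev Kf fz (X (n + 1))) - d1 z (ev Kf fz (X (n + 1)))"
  define P where "P = hess_pinv d2 lam Kf X Y n z fz (Kf (X (n + 1)))"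
  have "0 < N" by (simp add: N_def)
  have "2 * lam * norm P \<le> s"
    using hess_fz_coercive[of P] hess_fz_hess_pinv by (simp add: P_def s_def)
  then have P: "norm P \<le> s / (2 * lam)"
    using lam_pos by (simp add: field_simps)
  have "norm (fy - f_IF d1 d2 lam Kf X Y n z fz y) = norm ((fy - fz) + (\<Delta> / N) *\<^sub>R P)"
    by (simp add: f_IF_eq \<Delta>_def P_def N_def algebra_simps)
  also have "\<dots> \<le> norm (fy - fz) + \<bar>\<Delta>\<bar> / N * norm P"
    using \<open>0 < N\<close> by (intro order_trans[OF norm_triangle_ineq]) simp
  also have "\<dots> \<le> \<bar>\<Delta>\<bar> * s / (2 * lam * N) + \<bar>\<Delta>\<bar> / N * (s / (2 * lam))"
    using norm_fy_minus_fz_le P \<open>0 < N\<close>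
    by (intro add_mono mult_left_mono) (simp_all add: \<Delta>_def s_def N_def)
  also have "\<dots> = s * (2 * \<rho> / (lam * N))"
    using lam_pos \<open>0 < N\<close> by (simp add: \<rho>_def \<Delta>_def field_simps)
  finally show ?thesis .
qed

lemma hess_IF_error_eq:
  defines "u0 \<equiv> ev Kf fz (X (n + 1))" and "u1 \<equiv> ev Kf fy (X (n + 1))"
  shows "hess d2 lam Kf X Y n z fz (fy - f_IF d1 d2 lam Kf X Y n z fz y) =
    ((d1 z u1 - d1 z u0 - (d1 y u1 - d1 y u0)) / real (n + 1)) *\<^sub>R Kf (X (n + 1))
    - (grad d1 lam Kf X Y n z fy - grad d1 lam Kf X Y n z fz - hess d2 lam Kf X Y n z fz (fy - fz))"
proof -
  let ?G = "grad d1 lam Kf X Y n" and ?H = "hess d2 lam Kf X Y n z fz"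
  define K where "K = Kf (X (n + 1))"
  define N where "N = real (n + 1)"
  define a where "a = (d1 z u1 - d1 y u1) / N"
  define b where "b = (d1 y u0 - d1 z u0) / N"
  have error_eq: "fy - f_IF d1 d2 lam Kf X Y n z fz y = (fy - fz) + b *\<^sub>R hess_pinv d2 lam Kf X Y n z fz K"
    by (simp add: f_IF_eq b_def u0_def N_def K_def algebra_simps)
  have "?H (fy - f_IF d1 d2 lam Kf X Y n z fz y) = ?H (fy - fz) + b *\<^sub>R K"
    unfolding error_eq using hess_fz_hess_pinv
    by (simp add: linear_add[OF linear_hess] linear_scale[OF linear_hess] K_def)
  also have "?H (fy - fz) = (?G z fy - ?G y fy) - (?G z fy - ?G z fz - ?H (fy - fz))"
    by (simp add: grad_fz grad_fy)
  also have "?G z fy - ?G y fy = a *\<^sub>R K"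
    by (simp add: grad_diff_label a_def u1_def N_def K_def)
  finally have "?H (fy - f_IF d1 d2 lam Kf X Y n z fz y) = (a + b) *\<^sub>R K - (?G z fy - ?G z fz - ?H (fy - fz))"
    by (simp add: scaleR_add_left algebra_simps)
  also have "a + b = (d1 z u1 - d1 z u0 - (d1 y u1 - d1 y u0)) / N"
    by (simp add: a_def b_def add_divide_distrib[symmetric] algebra_simps)
  finally show ?thesis by (simp add: K_def N_def)
qed

lemma IF_error_le_remainder:
  "norm (fy - f_IF d1 d2 lam Kf X Y n z fz y) \<le>
     (2 * \<beta> * (norm (Kf (X (n + 1))))\<^sup>2 * norm (fy - fz)
      + \<xi> * (norm (fy - fz))\<^sup>2 * (\<Sum>i=1..n + 1. norm (Kf (X i)) ^ 3)) / (2 * lam * real (n + 1))"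
proof -
  define K where "K = Kf (X (n + 1))"
  define N where "N = real (n + 1)"
  define T where "T = (\<Sum>i=1..n + 1. norm (Kf (X i)) ^ 3)"
  define u0 where "u0 = ev Kf fz (X (n + 1))"
  define u1 where "u1 = ev Kf fy (X (n + 1))"
  define D where "D = fy - fz"
  define R where "R = grad d1 lam Kf X Y n z fy - grad d1 lam Kf X Y n z fz - hess d2 lam Kf X Y n z fz D"
  define e where "e = fy - f_IF d1 d2 lam Kf X Y n z fz y"
  have "0 < N" by (simp add: N_def)
  have "0 \<le> \<beta>" using lipschitz_on_nonneg[OF d1_lipschitz[OF z_in]] .
  have lip: "\<bar>d1 w u1 - d1 w u0\<bar> \<le> \<beta> * \<bar>u1 - u0\<bar>" if "w \<in> \<Y>" for w
    using lipschitz_onD[OF d1_lipschitz[OF that]] by (simp add: dist_real_def)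
  have "u1 - u0 = inner D K"
    by (simp add: u1_def u0_def D_def K_def ev_def inner_diff_left)
  then have "\<bar>u1 - u0\<bar> \<le> norm D * norm K"
    using Cauchy_Schwarz_ineq2[of D K] by simp
  then have "\<beta> * \<bar>u1 - u0\<bar> \<le> \<beta> * (norm D * norm K)"
    using \<open>0 \<le> \<beta>\<close> by (rule mult_left_mono)
  then have "\<bar>d1 z u1 - d1 z u0 - (d1 y u1 - d1 y u0)\<bar> / N * norm K
      \<le> 2 * \<beta> * norm D * norm K / N * norm K"
    using lip[OF z_in] lip[OF y_in] \<open>0 < N\<close> by (intro mult_right_mono divide_right_mono) auto
  moreover have "norm R \<le> \<xi> / N * (norm D)\<^sup>2 * T"
    unfolding R_def D_def N_def T_def
    by (rule norm_grad_taylor_remainder_le[OF _ xi_nonneg]) (use d1_taylor aug_label_in z_in in auto)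
  moreover have "2 * lam * norm e \<le> \<bar>d1 z u1 - d1 z u0 - (d1 y u1 - d1 y u0)\<bar> / N * norm K + norm R"
  proof -
    have "2 * lam * norm e \<le> norm (hess d2 lam Kf X Y n z fz e)" by (rule hess_fz_coercive)
    also have "hess d2 lam Kf X Y n z fz e = ((d1 z u1 - d1 z u0 - (d1 y u1 - d1 y u0)) / N) *\<^sub>R K - R"
      unfolding e_def hess_IF_error_eq R_def D_def u0_def u1_def K_def N_def ..
    also have "norm \<dots> \<le> \<bar>d1 z u1 - d1 z u0 - (d1 y u1 - d1 y u0)\<bar> / N * norm K + norm R"
      using \<open>0 < N\<close> by (intro order_trans[OF norm_triangle_ineq4]) simp
    finally show ?thesis .
  qed
  ultimately have "2 * lam * norm e \<le> (2 * \<beta> * (norm K)\<^sup>2 * norm D + \<xi> * (norm D)\<^sup>2 * T) / N"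
    by (simp add: add_divide_distrib power2_eq_square mult_ac)
  then show ?thesis
    using lam_pos \<open>0 < N\<close> unfolding e_def D_def K_def T_def N_def[symmetric]
    by (simp add: field_simps)
qed

lemma IF_error_le_second_order:
  defines "\<rho> \<equiv> (1 / 2) * \<bar>- d1 z (ev Kf fz (X (n + 1))) + d1 y (ev Kf fz (X (n + 1)))\<bar>"
    and "s \<equiv> norm (Kf (X (n + 1)))" and "N \<equiv> real (n + 1)"
    and "T \<equiv> \<Sum>i=1..n + 1. norm (Kf (X i)) ^ 3"
    and "\<rho>t \<equiv> (1 + (norm (Kf (X (n + 1))))\<^sup>2 * \<beta> / (lam * real (n + 1)))
      * ((1 / 2) * \<bar>- d1 z (ev Kf fz (X (n + 1))) + d1 y (ev Kf fz (X (n + 1)))\<bar>)"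
  shows "norm (fy - f_IF d1 d2 lam Kf X Y n z fz y)
    \<le> s * (((\<xi> / 2) * s * ((1 / N) * T) * \<rho>t\<^sup>2 + 2 * lam * s\<^sup>2 * \<beta> * \<rho>t) / (lam ^ 3 * N\<^sup>2))"
proof -
  define d where "d = norm (fy - fz)"
  define d_max where "d_max = \<rho> * s / (lam * N)"
  have "0 < N" by (simp add: N_def)
  have "0 \<le> \<beta>" using lipschitz_on_nonneg[OF d1_lipschitz[OF z_in]] .
  have "0 \<le> T" by (simp add: T_def sum_nonneg)
  have "0 \<le> \<rho>" by (simp add: \<rho>_def)
  have "0 \<le> s\<^sup>2 * \<beta> / (lam * N)"
    using \<open>0 \<le> \<beta>\<close> lam_pos \<open>0 < N\<close> by simp
  then have "1 * \<rho> \<le> (1 + s\<^sup>2 * \<beta> / (lam * N)) * \<rho>"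
    using \<open>0 \<le> \<rho>\<close> by (intro mult_right_mono) auto
  then have "\<rho> \<le> \<rho>t"
    by (simp add: \<rho>t_def \<rho>_def s_def N_def)
  have "d \<le> d_max"
    using norm_fy_minus_fz_le lam_pos by (simp add: d_def d_max_def \<rho>_def s_def N_def field_simps)
  have "norm (fy - f_IF d1 d2 lam Kf X Y n z fz y) \<le> (2 * \<beta> * s\<^sup>2 * d + \<xi> * d\<^sup>2 * T) / (2 * lam * N)"
    using IF_error_le_remainder by (simp add: d_def s_def T_def N_def)
  also have "\<dots> \<le> (2 * \<beta> * s\<^sup>2 * d_max + \<xi> * d_max\<^sup>2 * T) / (2 * lam * N)"
    using \<open>d \<le> d_max\<close> \<open>0 \<le> \<beta>\<close> \<open>0 \<le> T\<close> xi_nonneg lam_pos \<open>0 < N\<close>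
    by (intro divide_right_mono add_mono mult_left_mono mult_right_mono power_mono)
      (auto simp: d_def)
  also have "\<dots> = s * (((\<xi> / 2) * s * ((1 / N) * T) * \<rho>\<^sup>2 + lam * s\<^sup>2 * \<beta> * \<rho>) / (lam ^ 3 * N\<^sup>2))"
    using lam_pos \<open>0 < N\<close> by (simp add: d_max_def field_simps power2_eq_square power3_eq_cube)
  also have "\<dots> \<le> s * (((\<xi> / 2) * s * ((1 / N) * T) * \<rho>t\<^sup>2 + 2 * lam * s\<^sup>2 * \<beta> * \<rho>t) / (lam ^ 3 * N\<^sup>2))"
    using \<open>0 \<le> \<rho>\<close> \<open>\<rho> \<le> \<rho>t\<close> \<open>0 \<le> \<beta>\<close> \<open>0 \<le> T\<close> xi_nonneg lam_pos \<open>0 < N\<close>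
    by (intro mult_left_mono divide_right_mono add_mono mult_mono power_mono) (auto simp: s_def)
  finally show ?thesis .
qed

end

theorem proposition20:
  fixes loss d1 d2 d3 :: "real \<Rightarrow> real \<Rightarrow> real"
    and Kf :: "'x \<Rightarrow> 'h::{real_inner, complete_space}"
    and \<X> :: "'x set" and \<Y> :: "real set"
    and X :: "nat \<Rightarrow> 'x" and Y :: "nat \<Rightarrow> real"
    and n :: nat and lam \<beta> \<xi> z y :: real and fz fy :: 'h
  assumes n: "n \<ge> 1"
    and X_in: "\<forall>i\<in>{1..n + 1}. X i \<in> \<X>"
    and Y_in: "\<forall>i\<in>{1..n}. Y i \<in> \<Y>"
    and z_in: "z \<in> \<Y>" and y_in: "y \<in> \<Y>"
    and lam: "lam > 0" and beta: "\<beta> > 0" and xi: "\<xi> > 0"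
    and convex: "\<forall>y'\<in>\<Y>. convex_on UNIV (loss y')"
    and deriv1: "\<forall>y'\<in>\<Y>. \<forall>u. (loss y' has_real_derivative d1 y' u) (at u)"
    and deriv2: "\<forall>y'\<in>\<Y>. \<forall>u. (d1 y' has_real_derivative d2 y' u) (at u)"
    and deriv3: "\<forall>y'\<in>\<Y>. \<forall>u. (d2 y' has_real_derivative d3 y' u) (at u)"
    and lip: "\<forall>y'\<in>\<Y>. \<beta>-lipschitz_on UNIV (d1 y')"
    and d3_bound: "\<forall>y'\<in>\<Y>. \<forall>u. \<bar>d3 y' u\<bar> \<le> \<xi>"
    and fz_min: "\<forall>g. risk loss lam Kf X Y n z fz \<le> risk loss lam Kf X Y n z g"
    and fy_min: "\<forall>g. risk loss lam Kf X Y n y fy \<le> risk loss lam Kf X Y n y g"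
  shows
    "let Knn = kmat Kf X (n + 1) (n + 1);
         N = real (n + 1);
         u0 = ev Kf fz (X (n + 1));
         \<rho>1 = (1 / 2) * \<bar>- d1 z u0 + d1 y u0\<bar>;
         \<rho>1t = (1 + Knn * \<beta> / (lam * N)) * \<rho>1;
         \<rho>2 = (\<xi> / 2) * sqrt Knn
                 * ((1 / N) * (\<Sum>i=1..n + 1. (kmat Kf X i i) powr (3 / 2))) * \<rho>1t\<^sup>2
               + 2 * lam * Knn * \<beta> * \<rho>1t
     in norm (fy - f_IF d1 d2 lam Kf X Y n z fz y)
          \<le> sqrt Knn * min (\<rho>2 / (lam ^ 3 * N\<^sup>2)) (2 * \<rho>1 / (lam * N))"
proof -
  have d1_mono: "mono (d1 w)" if "w \<in> \<Y>" for w
    using convex_on_deriv_mono convex deriv1 that by blast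
  interpret influence_setting loss d1 d2 Kf X Y n lam \<beta> \<xi> \<Y> z y fz fy
  proof
    show "0 \<le> d2 w u" if "w \<in> \<Y>" for w u
      using mono_imp_deriv_nonneg d1_mono deriv2 that by blast
    show "\<bar>d1 w a - d1 w b - d2 w b * (a - b)\<bar> \<le> \<xi> * (a - b)\<^sup>2" if "w \<in> \<Y>" for w a b
      using taylor_remainder_le deriv2 deriv3 d3_bound that by blast
  qed (use assms d1_mono in auto)
  have Knn: "kmat Kf X (n + 1) (n + 1) = (norm (Kf (X (n + 1))))\<^sup>2"
    by (simp add: kmat_def power2_norm_eq_inner)
  show ?thesis
    unfolding Let_def sqrt_kmat_diag kmat_diag_powr Knn
    using IF_error_le_first_order IF_error_le_second_order by (simp add: min_def)
qed

end
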